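(* Let $R$ be a finite chain ring with $R/\operatorname{rad}R\cong\mathbb{F}_q$ and composition length $m\geq 3$ of ${}_RR$. Then there is no $(q^m+q^{m-1}+1,2)$-arc (hyperoval) in the projective Hjelmslev plane $\mathrm{PHG}(2,R)$.
   Context: A finite chain ring is a finite (not necessarily commutative) ring whose left ideals (equivalently right ideals) form a chain under inclusion; $q$ is the order of its residue field $R/\operatorname{rad}R$ and $m$ is the composition length of ${}_RR$, so $|R|=q^m$. The projective Hjelmslev plane $\mathrm{PHG}(2,R)$ has as points the free rank-$1$ submodules of $R^3_R$, as lines the free rank-$2$ submodules of $R^3_R$, with incidence given by set inclusion. An $(n,u)$-arc in $\mathrm{PHG}(2,R)$ is an $n$-multiset of points such that every line contains at most $u$ of its points, counted with multiplicity. *)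

theory Defs
  imports Main "HOL-Library.Multiset"
begin

definition left_ideal :: "('a::ring_1) set \<Rightarrow> bool" where
  "left_ideal I \<longleftrightarrow> 0 \<in> I \<and> (\<forall>x\<in>I. \<forall>y\<in>I. x + y \<in> I) \<and> (\<forall>x\<in>I. - x \<in> I)
     \<and> (\<forall>r. \<forall>x\<in>I. r * x \<in> I)"

definition chain_ring :: "'a::{ring_1,finite} itself \<Rightarrow> bool" where
  "chain_ring _ \<longleftrightarrow> (\<forall>I J :: 'a set. left_ideal I \<longrightarrow> left_ideal J \<longrightarrow> I \<subseteq> J \<or> J \<subseteq> I)"

definition maximal_left_ideal :: "('a::ring_1) set \<Rightarrow> bool" where
  "maximal_left_ideal I \<longleftrightarrow> left_ideal I \<and> I \<noteq> UNIV \<and>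
     (\<forall>J. left_ideal J \<longrightarrow> I \<subseteq> J \<longrightarrow> J = I \<or> J = UNIV)"

definition rad :: "'a::ring_1 itself \<Rightarrow> 'a set" where
  "rad _ = \<Inter> {I. maximal_left_ideal I}"

text \<open>q = |R / rad R|, the order of the residue field.\<close>
definition residue_order :: "'a::{ring_1,finite} itself \<Rightarrow> nat" where
  "residue_order T = card (UNIV :: 'a set) div card (rad T)"

text \<open>In a chain ring the left
  ideals form a chain R = I_0 > I_1 > ... > I_m = 0, which is the unique composition
  series, so the composition length is (number of left ideals) - 1.\<close>
definition chain_length :: "'a::{ring_1,finite} itself \<Rightarrow> nat" where
  "chain_length _ = card {I :: 'a set. left_ideal I} - 1"

type_synonym 'a vec3 = "'a \<times> 'a \<times> 'a"

definition smul :: "'a::ring_1 vec3 \<Rightarrow> 'a \<Rightarrow> 'a vec3" where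
  "smul x r = (fst x * r, fst (snd x) * r, snd (snd x) * r)"

definition vadd :: "'a::ring_1 vec3 \<Rightarrow> 'a vec3 \<Rightarrow> 'a vec3" where
  "vadd x y = (fst x + fst y, fst (snd x) + fst (snd y), snd (snd x) + snd (snd y))"

definition hj_point :: "'a::ring_1 vec3 set \<Rightarrow> bool" where
  "hj_point S \<longleftrightarrow> (\<exists>x. S = {smul x r | r. True} \<and> (\<forall>r. smul x r = (0,0,0) \<longrightarrow> r = 0))"

definition hj_line :: "'a::ring_1 vec3 set \<Rightarrow> bool" where
  "hj_line S \<longleftrightarrow> (\<exists>x y. S = {vadd (smul x r) (smul y s) | r s. True} \<and>
       (\<forall>r s. vadd (smul x r) (smul y s) = (0,0,0) \<longrightarrow> r = 0 \<and> s = 0))"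

definition hj_arc :: "'a::ring_1 vec3 set multiset \<Rightarrow> nat \<Rightarrow> nat \<Rightarrow> bool" where
  "hj_arc A n u \<longleftrightarrow> (\<forall>p\<in>#A. hj_point p) \<and> size A = n \<and>
     (\<forall>L. hj_line L \<longrightarrow> size (filter_mset (\<lambda>p. p \<subseteq> L) A) \<le> u)"

end

theory Submission
  imports Defs
begin

text \<open>
  Write \<open>q = |R / rad R|\<close> and \<open>m\<close> for the composition length. A hyperoval \<open>K\<close> has
  \<open>q^m + q^(m-1) + 1\<close> points, which for \<open>m \<ge> 3\<close> exceeds the number \<open>q^2 + q + 1\<close> of points
  of the residual plane \<open>PG(2, q)\<close>; hence two members \<open>P, Q\<close> of \<open>K\<close> (possibly one point
  counted twice) are neighbours. Normalise \<open>P = (1, a, b) R\<close>. The lines through \<open>P\<close> spanned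
  with \<open>(0, 1, g)\<close>, \<open>g \<in> R\<close>, and with \<open>(0, d, 1)\<close>, \<open>d \<in> rad R\<close>, cover every point, and since
  every element of \<open>rad R\<close> has a nonzero left annihilator the neighbour \<open>Q\<close> lies on two of
  them. Each of these \<open>|R| + |rad R|\<close> lines meets \<open>K\<close> in at most two points, so counting
  incidences gives \<open>|K| \<le> |R| + |rad R| \<le> q^m + q^(m-1)\<close>, where the last bound holds because
  each of the \<open>m\<close> factors of the composition series of \<open>R\<close> has at most \<open>q\<close> elements.
\<close>

lemma left_ideal_0: "left_ideal I \<Longrightarrow> 0 \<in> I"
  and left_ideal_add: "left_ideal I \<Longrightarrow> a \<in> I \<Longrightarrow> b \<in> I \<Longrightarrow> a + b \<in> I"
  and left_ideal_uminus: "left_ideal I \<Longrightarrow> a \<in> I \<Longrightarrow> - a \<in> I"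
  and left_ideal_mult: "left_ideal I \<Longrightarrow> a \<in> I \<Longrightarrow> r * a \<in> I"
  unfolding left_ideal_def by blast+

lemma left_ideal_diff: "left_ideal I \<Longrightarrow> a \<in> I \<Longrightarrow> b \<in> I \<Longrightarrow> a - b \<in> I"
  by (metis diff_conv_add_uminus left_ideal_add left_ideal_uminus)

lemma left_ideal_UNIV: "left_ideal (UNIV :: 'a::ring_1 set)"
  and left_ideal_singleton_zero: "left_ideal {0 :: 'a::ring_1}"
  by (simp_all add: left_ideal_def)

lemma left_ideal_combination:
  fixes x :: "'a::ring_1"
  assumes A: "left_ideal A" and J: "left_ideal J"
  shows "left_ideal {a * x + j | a j. a \<in> A \<and> j \<in> J}" (is "left_ideal ?C")
  unfolding left_ideal_def
proof (intro conjI ballI allI)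
  have "0 = 0 * x + 0" by simp
  then show "0 \<in> ?C" using left_ideal_0[OF A] left_ideal_0[OF J] by blast
next
  fix u v assume "u \<in> ?C" "v \<in> ?C"
  then obtain a j a' j' where *: "a \<in> A" "j \<in> J" "a' \<in> A" "j' \<in> J" "u = a * x + j" "v = a' * x + j'"
    by blast
  then have "u + v = (a + a') * x + (j + j')" by (simp add: algebra_simps)
  moreover have "a + a' \<in> A" "j + j' \<in> J" using * A J by (simp_all add: left_ideal_add)
  ultimately show "u + v \<in> ?C" by blast
next
  fix u assume "u \<in> ?C"
  then obtain a j where *: "a \<in> A" "j \<in> J" "u = a * x + j" by blast
  then have "- u = (- a) * x + (- j)" by simp
  moreover have "- a \<in> A" "- j \<in> J" using * A J by (simp_all add: left_ideal_uminus)
  ultimately show "- u \<in> ?C" by blast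
next
  fix c u assume "u \<in> ?C"
  then obtain a j where *: "a \<in> A" "j \<in> J" "u = a * x + j" by blast
  then have "c * u = (c * a) * x + c * j" by (simp add: algebra_simps)
  moreover have "c * a \<in> A" "c * j \<in> J" using * A J by (simp_all add: left_ideal_mult)
  ultimately show "c * u \<in> ?C" by blast
qed

lemma left_ideal_principal: "left_ideal {r * (x::'a::ring_1) | r. True}"
proof -
  have eq: "{r * x | r. True} = {a * x + j | a j. a \<in> UNIV \<and> j \<in> {0}}" by auto
  show ?thesis unfolding eq by (rule left_ideal_combination[OF left_ideal_UNIV left_ideal_singleton_zero])
qed

lemma maximal_left_ideal_exists: "\<exists>I :: 'a::{ring_1,finite} set. maximal_left_ideal I"
proof -
  let ?S = "{I :: 'a set. left_ideal I \<and> I \<noteq> UNIV}"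
  have "{0} \<in> ?S" using left_ideal_singleton_zero by (metis (mono_tags) UNIV_I mem_Collect_eq singletonD zero_neq_one)
  then obtain I where I: "I \<in> ?S" "\<forall>J\<in>?S. I \<subseteq> J \<longrightarrow> I = J"
    using finite_has_maximal[of ?S, OF finite] by blast
  then have "maximal_left_ideal I" unfolding maximal_left_ideal_def by blast
  then show ?thesis ..
qed

lemma left_inverse_imp_right_inverse:
  fixes x y :: "'a::{ring_1,finite}"
  assumes "y * x = 1"
  shows "x * y = 1"
proof -
  have "inj ((*) x)"
  proof (rule injI)
    fix a b assume "x * a = x * b"
    then have "(y * x) * a = (y * x) * b" by (simp add: mult.assoc)
    with assms show "a = b" by simp
  qed
  then have "surj ((*) x)" by (simp add: finite_UNIV_inj_surj)
  then obtain z where z: "x * z = 1" by (metis surjD)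
  have "y = (y * x) * z" using z by (simp add: mult.assoc)
  with assms z show ?thesis by simp
qed

lemma no_left_inverse_imp_zero_divisor:
  fixes x :: "'a::{ring_1,finite}"
  assumes "\<nexists>y. y * x = 1"
  shows "\<exists>\<mu>. \<mu> \<noteq> 0 \<and> \<mu> * x = 0"
proof (rule ccontr)
  assume "\<not> ?thesis"
  then have "inj (\<lambda>r. r * x)"
    by (intro injI) (metis eq_iff_diff_eq_0 left_diff_distrib)
  then have "surj (\<lambda>r. r * x)" by (simp add: finite_UNIV_inj_surj)
  then obtain y where "y * x = 1" by (metis surjD)
  with assms show False by blast
qed

definition unit_inv :: "'a::ring_1 \<Rightarrow> 'a" where
  "unit_inv x = (SOME y. y * x = 1)"

lemma unit_inv:
  fixes x :: "'a::{ring_1,finite}"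
  assumes "\<exists>y. y * x = 1"
  shows "unit_inv x * x = 1" "x * unit_inv x = 1"
proof -
  show "unit_inv x * x = 1" unfolding unit_inv_def using assms by (rule someI_ex)
  then show "x * unit_inv x = 1" by (rule left_inverse_imp_right_inverse)
qed

section \<open>Finite chain rings\<close>

locale finite_chain_ring =
  fixes T :: "'a::{ring_1,finite} itself"
  assumes chain_ring: "chain_ring T"
begin

lemma left_ideals_comparable: "left_ideal (I :: 'a set) \<Longrightarrow> left_ideal J \<Longrightarrow> I \<subseteq> J \<or> J \<subseteq> I"
  using chain_ring unfolding chain_ring_def by blast

lemma maximal_left_ideal_unique:
  assumes "maximal_left_ideal (I :: 'a set)" "maximal_left_ideal J"
  shows "I = J"
proof -
  have "I \<subseteq> J \<or> J \<subseteq> I"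
    using assms left_ideals_comparable unfolding maximal_left_ideal_def by blast
  with assms show ?thesis unfolding maximal_left_ideal_def by blast
qed

lemma maximal_left_ideal_rad: "maximal_left_ideal (rad T)"
proof -
  obtain I :: "'a set" where I: "maximal_left_ideal I" using maximal_left_ideal_exists by blast
  then have "{I. maximal_left_ideal I} = {I}" using maximal_left_ideal_unique by blast
  with I show ?thesis unfolding rad_def by simp
qed

lemma left_ideal_rad: "left_ideal (rad T)"
  using maximal_left_ideal_rad unfolding maximal_left_ideal_def by blast

lemma rad_0: "0 \<in> rad T"
  and rad_add: "a \<in> rad T \<Longrightarrow> b \<in> rad T \<Longrightarrow> a + b \<in> rad T"
  and rad_uminus: "a \<in> rad T \<Longrightarrow> - a \<in> rad T"
  and rad_diff: "a \<in> rad T \<Longrightarrow> b \<in> rad T \<Longrightarrow> a - b \<in> rad T"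
  and rad_mult_left: "a \<in> rad T \<Longrightarrow> r * a \<in> rad T"
  by (fact left_ideal_0[OF left_ideal_rad] left_ideal_add[OF left_ideal_rad]
      left_ideal_uminus[OF left_ideal_rad] left_ideal_diff[OF left_ideal_rad]
      left_ideal_mult[OF left_ideal_rad])+

lemma proper_left_ideal_subset_rad:
  assumes "left_ideal (I :: 'a set)" "I \<noteq> UNIV"
  shows "I \<subseteq> rad T"
proof -
  have "rad T \<subseteq> I \<Longrightarrow> I = rad T"
    using maximal_left_ideal_rad assms unfolding maximal_left_ideal_def by blast
  then show ?thesis using left_ideals_comparable[OF assms(1) left_ideal_rad] by blast
qed

lemma one_notin_rad: "1 \<notin> rad T"
  using maximal_left_ideal_rad rad_mult_left[of 1]
  unfolding maximal_left_ideal_def by (metis UNIV_eq_I mult.right_neutral)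

lemma rad_iff_no_left_inverse: "x \<in> rad T \<longleftrightarrow> (\<nexists>y. y * x = 1)"
proof
  assume "x \<in> rad T"
  then show "\<nexists>y. y * x = 1" using rad_mult_left one_notin_rad by metis
next
  assume "\<nexists>y. y * x = 1"
  then have "1 \<notin> {r * x | r. True}" by (auto dest: sym)
  then have "{r * x | r. True} \<noteq> UNIV" by blast
  then have "{r * x | r. True} \<subseteq> rad T"
    by (rule proper_left_ideal_subset_rad[OF left_ideal_principal])
  moreover have "x \<in> {r * x | r. True}" by (metis (mono_tags) mem_Collect_eq mult_1)
  ultimately show "x \<in> rad T" by blast
qed

lemma unit_inv_notin_rad:
  assumes "x \<notin> rad T"
  shows "unit_inv x * x = 1" "x * unit_inv x = 1"
  using unit_inv assms rad_iff_no_left_inverse by blast+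

lemma rad_mult_right:
  assumes "x \<in> rad T"
  shows "x * r \<in> rad T"
proof (rule ccontr)
  assume "x * r \<notin> rad T"
  then obtain v where "x * r * v = 1"
    using unit_inv_notin_rad(2) by blast
  then have "(r * v) * x = 1"
    using left_inverse_imp_right_inverse[of x "r * v"] by (simp add: mult.assoc)
  with assms show False using rad_iff_no_left_inverse by blast
qed

lemma one_minus_rad_cancel:
  assumes "\<mu> \<in> rad T" "(1 - \<mu>) * x \<in> J" "left_ideal J"
  shows "x \<in> J"
proof -
  have "1 - \<mu> \<notin> rad T" using assms(1) one_notin_rad rad_add by fastforce
  then obtain v where "v * (1 - \<mu>) = 1" using rad_iff_no_left_inverse by blast
  then have "x = v * ((1 - \<mu>) * x)" by (simp add: mult.assoc[symmetric])
  with assms(2,3) show ?thesis using left_ideal_mult by metis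
qed

lemma ex_left_annihilator_in_rad:
  assumes "\<alpha> \<in> rad T" "\<alpha> \<noteq> 0"
  shows "\<exists>\<mu>\<in>rad T. \<mu> \<noteq> 0 \<and> \<mu> * \<alpha> = 0"
proof -
  obtain \<mu> where \<mu>: "\<mu> \<noteq> 0" "\<mu> * \<alpha> = 0"
    using no_left_inverse_imp_zero_divisor assms(1) rad_iff_no_left_inverse by blast
  have "\<mu> \<in> rad T"
  proof (rule ccontr)
    assume "\<mu> \<notin> rad T"
    then have "\<alpha> = unit_inv \<mu> * (\<mu> * \<alpha>)"
      using unit_inv_notin_rad(1) by (simp add: mult.assoc[symmetric])
    with \<mu> assms(2) show False by simp
  qed
  with \<mu> show ?thesis by blast
qed

lemma left_divisibility_total: "(\<exists>g. b = g * a) \<or> (\<exists>d. a = d * (b :: 'a))"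
proof -
  have "a \<in> {r * a | r. True}" "b \<in> {r * b | r. True}" by (metis (mono_tags) mem_Collect_eq mult_1)+
  then show ?thesis
    using left_ideals_comparable[OF left_ideal_principal left_ideal_principal] by blast
qed

lemma left_factor_in_rad:
  assumes "a = d * b" "\<nexists>g. b = g * a"
  shows "d \<in> rad T"
proof (rule ccontr)
  assume "d \<notin> rad T"
  then have "b = unit_inv d * a"
    using assms(1) unit_inv_notin_rad(1) by (simp add: mult.assoc[symmetric])
  with assms(2) show False by blast
qed

text \<open>Take \<open>s\<close> in a minimal nonzero left ideal \<open>S\<close>: by Nakayama's lemma \<open>(rad T) s\<close> is a
  proper left subideal of \<open>S\<close>, hence zero.\<close>

lemma ex_annihilated_by_rad: "\<exists>s. s \<noteq> 0 \<and> (\<forall>\<mu>\<in>rad T. \<mu> * s = 0)"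
proof -
  let ?S = "{I :: 'a set. left_ideal I \<and> I \<noteq> {0}}"
  have "UNIV \<in> ?S" using left_ideal_UNIV by (metis (mono_tags) UNIV_I mem_Collect_eq singletonD zero_neq_one)
  then obtain S where S: "S \<in> ?S" "\<forall>I\<in>?S. I \<subseteq> S \<longrightarrow> S = I"
    using finite_has_minimal[of ?S, OF finite] by blast
  then obtain s where s: "s \<in> S" "s \<noteq> 0" using left_ideal_0 by blast
  let ?Rs = "{\<mu> * s + j | \<mu> j. \<mu> \<in> rad T \<and> j \<in> {0}}"
  have "left_ideal ?Rs" by (rule left_ideal_combination[OF left_ideal_rad left_ideal_singleton_zero])
  moreover have "?Rs \<subseteq> S" using S(1) s(1) left_ideal_mult by auto
  moreover have "?Rs \<noteq> S"
  proof
    assume "?Rs = S"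
    then obtain \<mu> where \<mu>: "\<mu> \<in> rad T" "s = \<mu> * s" using s(1) by auto
    then have "(1 - \<mu>) * s \<in> {0}" by (simp add: left_diff_distrib)
    then show False using one_minus_rad_cancel[OF \<mu>(1) _ left_ideal_singleton_zero] s(2) by blast
  qed
  ultimately have "?Rs = {0}" using S(2) by blast
  with s show ?thesis by auto
qed

end

section \<open>The residue field and the order of the ring\<close>

context finite_chain_ring
begin

text \<open>The predicate under \<open>SOME\<close> depends only on the coset \<open>a + rad T\<close>, so \<open>residue_rep\<close>
  picks one representative per coset.\<close>

definition residue_rep :: "'a \<Rightarrow> 'a" where
  "residue_rep a = (SOME b. a - b \<in> rad T)"

lemma residue_rep_diff: "a - residue_rep a \<in> rad T"
  unfolding residue_rep_def by (rule someI[of _ a]) (simp add: rad_0)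

lemma residue_rep_eq_iff: "residue_rep a = residue_rep b \<longleftrightarrow> a - b \<in> rad T"
proof
  assume "residue_rep a = residue_rep b"
  then have "a - b = (a - residue_rep a) - (b - residue_rep b)" by simp
  then show "a - b \<in> rad T" using residue_rep_diff rad_diff by metis
next
  assume ab: "a - b \<in> rad T"
  have "a - c \<in> rad T \<longleftrightarrow> b - c \<in> rad T" for c
  proof -
    have "a - c = (a - b) + (b - c)" "b - c = (a - c) - (a - b)" by simp_all
    then show ?thesis using ab rad_add rad_diff by metis
  qed
  then show "residue_rep a = residue_rep b" unfolding residue_rep_def by simp
qed

lemma residue_rep_add_rad:
  assumes "m \<in> rad T"
  shows "residue_rep (residue_rep c + m) = residue_rep c"
proof -
  have "residue_rep c + m - c = m - (c - residue_rep c)" by simp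
  then show ?thesis using residue_rep_eq_iff rad_diff[OF assms residue_rep_diff] by metis
qed

lemma bij_betw_residue_rep_rad:
  "bij_betw (\<lambda>a. (residue_rep a, a - residue_rep a)) UNIV (range residue_rep \<times> rad T)"
proof (rule bij_betw_byWitness[where f' = "\<lambda>(b, m). b + m"])
  show "(\<lambda>a. (residue_rep a, a - residue_rep a)) ` UNIV \<subseteq> range residue_rep \<times> rad T"
    using residue_rep_diff by auto
  show "\<forall>y\<in>range residue_rep \<times> rad T. (residue_rep (case y of (b, m) \<Rightarrow> b + m),
      (case y of (b, m) \<Rightarrow> b + m) - residue_rep (case y of (b, m) \<Rightarrow> b + m)) = y"
    using residue_rep_add_rad by auto
qed simp_all

lemma card_rad_pos: "card (rad T) > 0"
  using rad_0 by (auto simp: card_gt_0_iff)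

lemma card_UNIV_eq_card_range_residue_rep: "card (UNIV :: 'a set) = card (range residue_rep) * card (rad T)"
  using bij_betw_same_card[OF bij_betw_residue_rep_rad] by (simp add: card_cartesian_product)

lemma card_range_residue_rep: "card (range residue_rep) = residue_order T"
  unfolding residue_order_def card_UNIV_eq_card_range_residue_rep using card_rad_pos by simp

lemma card_UNIV_eq: "card (UNIV :: 'a set) = residue_order T * card (rad T)"
  using card_UNIV_eq_card_range_residue_rep card_range_residue_rep by simp

lemma residue_order_ge_2: "residue_order T \<ge> 2"
proof -
  have "residue_rep 0 \<noteq> residue_rep 1"
    using residue_rep_eq_iff one_notin_rad rad_uminus by fastforce
  then have "card {residue_rep 0, residue_rep 1} \<le> card (range residue_rep)"
    by (intro card_mono) auto
  with \<open>residue_rep 0 \<noteq> residue_rep 1\<close> show ?thesis by (simp add: card_range_residue_rep)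
qed

lemma generator_of_simple_factor:
  fixes I J :: "'a set"
  assumes I: "left_ideal I" and J: "left_ideal J" and "J \<subseteq> I" and x: "x \<in> I" "x \<notin> J"
    and between: "\<And>K. left_ideal K \<Longrightarrow> J \<subseteq> K \<Longrightarrow> K \<subseteq> I \<Longrightarrow> K = J \<or> K = I"
  shows "I = {a * x + j | a j. a \<in> UNIV \<and> j \<in> J}" and "a \<in> rad T \<Longrightarrow> a * x \<in> J"
proof -
  define C where "C A = {a * x + j | a j. a \<in> A \<and> j \<in> J}" for A :: "'a set"
  have C_cases: "C A = J \<or> C A = I" if A: "left_ideal A" for A
  proof (rule between)
    show "left_ideal (C A)" unfolding C_def by (rule left_ideal_combination[OF A J])
    show "J \<subseteq> C A"
    proof
      fix j assume "j \<in> J"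
      moreover have "j = 0 * x + j" by simp
      ultimately show "j \<in> C A" unfolding C_def using left_ideal_0[OF A] by blast
    qed
    show "C A \<subseteq> I"
      unfolding C_def using \<open>J \<subseteq> I\<close> x(1) left_ideal_add[OF I] left_ideal_mult[OF I] by blast
  qed
  have "x = 1 * x + 0" by simp
  then have "x \<in> C UNIV" unfolding C_def using left_ideal_0[OF J] by blast
  then show "I = {a * x + j | a j. a \<in> UNIV \<and> j \<in> J}"
    using C_cases[OF left_ideal_UNIV] x(2) unfolding C_def by blast
  have "x \<notin> C (rad T)"
  proof
    assume "x \<in> C (rad T)"
    then obtain a j where aj: "a \<in> rad T" "j \<in> J" "x = a * x + j" unfolding C_def by blast
    have "(1 - a) * x = x - a * x" by (simp add: left_diff_distrib)
    with aj(3) have "(1 - a) * x = j" by (metis add_diff_cancel_left')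
    then show False using one_minus_rad_cancel[OF aj(1) _ J] aj(2) x(2) by simp
  qed
  then have C_rad: "C (rad T) = J" using C_cases[OF left_ideal_rad] x(1) by blast
  show "a * x \<in> J" if "a \<in> rad T"
  proof -
    have "a * x + 0 \<in> C (rad T)" unfolding C_def using that left_ideal_0[OF J] by blast
    then show ?thesis using C_rad by simp
  qed
qed

lemma card_le_residue_order_mult:
  fixes I J :: "'a set"
  assumes I: "left_ideal I" and J: "left_ideal J" and "J \<subset> I"
    and between: "\<And>K. left_ideal K \<Longrightarrow> J \<subseteq> K \<Longrightarrow> K \<subseteq> I \<Longrightarrow> K = J \<or> K = I"
  shows "card I \<le> residue_order T * card J"
proof -
  obtain x where x: "x \<in> I" "x \<notin> J" using \<open>J \<subset> I\<close> by blast
  have "J \<subseteq> I" using \<open>J \<subset> I\<close> by blast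
  have generator: "I = {a * x + j | a j. a \<in> UNIV \<and> j \<in> J}" "\<And>a. a \<in> rad T \<Longrightarrow> a * x \<in> J"
    using generator_of_simple_factor[OF I J \<open>J \<subseteq> I\<close> x] between by blast+
  have "I \<subseteq> (\<lambda>(b, j). b * x + j) ` (range residue_rep \<times> J)"
  proof
    fix z assume "z \<in> I"
    then obtain r j where rj: "z = r * x + j" "j \<in> J" using generator(1) by blast
    have "(r - residue_rep r) * x + j \<in> J"
      using generator(2)[OF residue_rep_diff] left_ideal_add[OF J] rj(2) by blast
    moreover have "z = residue_rep r * x + ((r - residue_rep r) * x + j)"
      using rj(1) by (simp add: algebra_simps)
    ultimately show "z \<in> (\<lambda>(b, j). b * x + j) ` (range residue_rep \<times> J)"
      by (intro image_eqI[of _ _ "(residue_rep r, (r - residue_rep r) * x + j)"]) simp_all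
  qed
  then have "card I \<le> card ((\<lambda>(b, j). b * x + j) ` (range residue_rep \<times> J))"
    by (rule card_mono[OF finite])
  also have "\<dots> \<le> card (range residue_rep \<times> J)" by (rule card_image_le[OF finite])
  finally show ?thesis by (simp add: card_cartesian_product card_range_residue_rep)
qed

lemma card_left_ideal_le:
  fixes I :: "'a set"
  assumes "left_ideal I"
  shows "card I \<le> residue_order T ^ card {J. left_ideal J \<and> J \<subset> I}"
  using finite[of I] assms
proof (induction I rule: finite_psubset_induct)
  case (psubset I)
  let ?below = "\<lambda>I. {J :: 'a set. left_ideal J \<and> J \<subset> I}"
  show ?case
  proof (cases "I = {0}")
    case True
    then have "?below I = {}" using left_ideal_0 by blast
    then have "card (?below I) = 0" by (simp only: card.empty)
    moreover have "card I = 1" using True by simp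
    ultimately show ?thesis by (simp only: power_0 order_refl)
  next
    case False
    then have "{0} \<in> ?below I" using left_ideal_singleton_zero left_ideal_0[OF psubset.prems] by blast
    then obtain J where J: "J \<in> ?below I" and J_max: "\<forall>K\<in>?below I. J \<subseteq> K \<longrightarrow> J = K"
      using finite_has_maximal[of "?below I", OF finite] by blast
    then have lJ: "left_ideal J" and "J \<subset> I" by auto
    have "?below I = insert J (?below J)"
      using J J_max left_ideals_comparable[OF _ lJ] by blast
    moreover have "J \<notin> ?below J" by blast
    ultimately have card_below: "card (?below I) = Suc (card (?below J))"
      by (simp add: finite)
    have "card I \<le> residue_order T * card J"
      using J J_max by (intro card_le_residue_order_mult[OF psubset.prems lJ]) blast+
    also have "\<dots> \<le> residue_order T * residue_order T ^ card (?below J)"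
      using psubset.IH[OF \<open>J \<subset> I\<close> lJ] by simp
    finally show ?thesis using card_below by simp
  qed
qed

lemma card_UNIV_le: "card (UNIV :: 'a set) \<le> residue_order T ^ chain_length T"
proof -
  have "{J :: 'a set. left_ideal J \<and> J \<subset> UNIV} = {J. left_ideal J} - {UNIV}" by blast
  moreover have "card ({J :: 'a set. left_ideal J} - {UNIV}) = chain_length T"
    unfolding chain_length_def by (rule card_Diff_singleton) (simp add: left_ideal_UNIV)
  ultimately have "card {J :: 'a set. left_ideal J \<and> J \<subset> UNIV} = chain_length T" by simp
  then show ?thesis using card_left_ideal_le[OF left_ideal_UNIV] by simp
qed

lemma card_rad_le: "card (rad T) \<le> residue_order T ^ (chain_length T - 1)"
proof -
  have le: "residue_order T * card (rad T) \<le> residue_order T ^ chain_length T"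
    using card_UNIV_eq card_UNIV_le by simp
  have "residue_order T \<le> residue_order T * card (rad T)" using card_rad_pos by simp
  have "chain_length T \<noteq> 0"
  proof
    assume "chain_length T = 0"
    with le have "residue_order T * card (rad T) \<le> 1" by simp
    with \<open>residue_order T \<le> residue_order T * card (rad T)\<close> residue_order_ge_2 show False by linarith
  qed
  with le residue_order_ge_2 show ?thesis by (cases "chain_length T") simp_all
qed

end

lemma sum_size_filter_mset_swap:
  assumes "finite I"
  shows "(\<Sum>i\<in>I. size (filter_mset (R i) K)) = (\<Sum>p\<in>#K. card {i\<in>I. R i p})"
proof (induction K)
  case (add p K)
  have "(\<Sum>i\<in>I. size (filter_mset (R i) (add_mset p K)))
      = (\<Sum>i\<in>I. size (filter_mset (R i) K) + (if R i p then 1 else 0))"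
    by (intro sum.cong) auto
  also have "\<dots> = (\<Sum>i\<in>I. size (filter_mset (R i) K)) + (\<Sum>i\<in>I. if R i p then 1 else 0)"
    by (rule sum.distrib)
  also have "(\<Sum>i\<in>I. if R i p then 1 else 0) = card {i\<in>I. R i p}"
    using assms by (simp add: sum.If_cases Int_def)
  finally show ?case using add.IH by simp
qed simp

lemma multiset_pigeonhole:
  assumes "finite B" "\<forall>p\<in>#K. f p \<in> B" "card B < size K"
  shows "\<exists>P Q. {#P, Q#} \<subseteq># K \<and> f P = f Q"
proof (rule ccontr)
  assume none: "\<not> ?thesis"
  have pair_subset: "{#P, Q#} \<subseteq># K" if "P \<in># K" "Q \<in># K" "P \<noteq> Q" for P Q
    using that by (simp add: insert_subset_eq_iff in_diff_count)
  have "count K p = 1" if "p \<in># K" for p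
  proof (rule ccontr)
    assume "count K p \<noteq> 1"
    moreover have "count K p > 0" using that by simp
    ultimately have "count K p \<ge> 2" by linarith
    then have "{#p, p#} \<subseteq># K" by (simp add: subseteq_mset_def)
    with none show False by blast
  qed
  then have "size K = card (set_mset K)"
    by (simp add: size_multiset_overloaded_eq)
  also have "\<dots> = card (f ` set_mset K)"
    using none pair_subset by (intro card_image[symmetric] inj_onI) blast
  also have "\<dots> \<le> card B" using assms(1,2) by (intro card_mono) auto
  finally show False using assms(3) by simp
qed

section \<open>Points, lines and covering pencils\<close>

definition span1 :: "'a::ring_1 vec3 \<Rightarrow> 'a vec3 set" where
  "span1 x = {smul x r | r. True}"

definition span2 :: "'a::ring_1 vec3 \<Rightarrow> 'a vec3 \<Rightarrow> 'a vec3 set" where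
  "span2 x y = {vadd (smul x r) (smul y s) | r s. True}"

definition free1 :: "'a::ring_1 vec3 \<Rightarrow> bool" where
  "free1 x \<longleftrightarrow> (\<forall>r. smul x r = (0, 0, 0) \<longrightarrow> r = 0)"

definition free2 :: "'a::ring_1 vec3 \<Rightarrow> 'a vec3 \<Rightarrow> bool" where
  "free2 x y \<longleftrightarrow> (\<forall>r s. vadd (smul x r) (smul y s) = (0, 0, 0) \<longrightarrow> r = 0 \<and> s = 0)"

lemma hj_point_iff: "hj_point S \<longleftrightarrow> (\<exists>x. S = span1 x \<and> free1 x)"
  unfolding hj_point_def span1_def free1_def ..

lemma hj_line_iff: "hj_line S \<longleftrightarrow> (\<exists>x y. S = span2 x y \<and> free2 x y)"
  unfolding hj_line_def span2_def free2_def ..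

lemma smul_triple [simp]: "smul (a, b, c) r = (a * r, b * r, c * r)"
  by (simp add: smul_def)

lemma vadd_triple [simp]: "vadd (a, b, c) (a', b', c') = (a + a', b + b', c + c')"
  by (simp add: vadd_def)

lemma span2_memI: "w = vadd (smul u r) (smul v s) \<Longrightarrow> w \<in> span2 u v"
  unfolding span2_def by blast

lemma span1_subset_span2:
  assumes "w \<in> span2 u v"
  shows "span1 w \<subseteq> span2 u v"
proof
  fix z assume "z \<in> span1 w"
  then obtain r s c where "w = vadd (smul u r) (smul v s)" "z = smul w c"
    using assms unfolding span1_def span2_def by blast
  then have "z = vadd (smul u (r * c)) (smul v (s * c))"
    by (cases u, cases v) (simp add: distrib_right mult.assoc)
  then show "z \<in> span2 u v" by (rule span2_memI)
qed

lemma span1_subset_span2_left: "span1 u \<subseteq> span2 u v"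
  by (rule span1_subset_span2, rule span2_memI[of _ _ 1 _ 0]) (cases u, cases v, simp)

lemma span1_smul_unit:
  assumes "u * v = 1" "v * u = 1"
  shows "span1 (smul x u) = span1 x"
proof -
  have "smul (smul x u) r = smul x (u * r)" for r by (cases x) (simp add: mult.assoc)
  moreover have "smul x r = smul (smul x u) (v * r)" for r
  proof -
    have "u * (v * r) = r" using assms by (simp add: mult.assoc[symmetric])
    then show ?thesis by (cases x) (simp add: mult.assoc)
  qed
  ultimately show ?thesis unfolding span1_def by blast
qed

definition linear_involution :: "('a::ring_1 vec3 \<Rightarrow> 'a vec3) \<Rightarrow> bool" where
  "linear_involution f \<longleftrightarrow> (\<forall>x. f (f x) = x) \<and> (\<forall>x r. f (smul x r) = smul (f x) r)
     \<and> (\<forall>x y. f (vadd x y) = vadd (f x) (f y))"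

definition swap12 :: "'a vec3 \<Rightarrow> 'a vec3" where
  "swap12 = (\<lambda>(a, b, c). (b, a, c))"

definition swap13 :: "'a vec3 \<Rightarrow> 'a vec3" where
  "swap13 = (\<lambda>(a, b, c). (c, b, a))"

lemma linear_involution_swap12: "linear_involution (swap12 :: 'a::ring_1 vec3 \<Rightarrow> 'a vec3)"
  and linear_involution_swap13: "linear_involution (swap13 :: 'a::ring_1 vec3 \<Rightarrow> 'a vec3)"
  unfolding linear_involution_def swap12_def swap13_def smul_def vadd_def by auto

context
  fixes f :: "'a::ring_1 vec3 \<Rightarrow> 'a vec3"
  assumes f: "linear_involution f"
begin

lemma linear_involution_twice: "f (f x) = x"
  and linear_involution_smul: "f (smul x r) = smul (f x) r"
  and linear_involution_vadd: "f (vadd x y) = vadd (f x) (f y)"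
  using f unfolding linear_involution_def by blast+

lemma linear_involution_image_image: "f ` f ` A = A"
  by (simp add: image_image linear_involution_twice)

lemma linear_involution_eq_zero_iff: "f z = (0, 0, 0) \<longleftrightarrow> z = (0, 0, 0)"
proof -
  have "f (0, 0, 0) = (0, 0, 0)"
    using linear_involution_smul[of "(0, 0, 0)" 0] by (cases "f (0, 0, 0)") simp
  then show ?thesis by (metis linear_involution_twice)
qed

lemma image_span1: "f ` span1 x = span1 (f x)"
proof -
  have "f ` span1 x = {f (smul x r) | r. True}" unfolding span1_def by blast
  then show ?thesis unfolding span1_def linear_involution_smul .
qed

lemma image_span2: "f ` span2 x y = span2 (f x) (f y)"
proof -
  have "f ` span2 x y = {f (vadd (smul x r) (smul y s)) | r s. True}" unfolding span2_def by blast
  then show ?thesis unfolding span2_def linear_involution_vadd linear_involution_smul .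
qed

lemma free1_image: "free1 x \<Longrightarrow> free1 (f x)"
  unfolding free1_def by (metis linear_involution_smul linear_involution_eq_zero_iff)

lemma free2_image: "free2 x y \<Longrightarrow> free2 (f x) (f y)"
  unfolding free2_def by (metis linear_involution_smul linear_involution_vadd linear_involution_eq_zero_iff)

lemma hj_point_image: "hj_point Z \<Longrightarrow> hj_point (f ` Z)"
  unfolding hj_point_iff using image_span1 free1_image by blast

lemma hj_line_image: "hj_line L \<Longrightarrow> hj_line (f ` L)"
  unfolding hj_line_iff using image_span2 free2_image by blast

end

definition covering_pencil :: "'a::ring_1 vec3 set \<Rightarrow> 'a vec3 set \<Rightarrow> 'i set \<Rightarrow> ('i \<Rightarrow> 'a vec3 set) \<Rightarrow> bool" where
  "covering_pencil P Q I L \<longleftrightarrow> finite I \<and> (\<forall>i\<in>I. hj_line (L i) \<and> P \<subseteq> L i)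
     \<and> (\<forall>Z. hj_point Z \<longrightarrow> (\<exists>i\<in>I. Z \<subseteq> L i))
     \<and> (\<exists>i\<in>I. \<exists>j\<in>I. i \<noteq> j \<and> Q \<subseteq> L i \<and> Q \<subseteq> L j)"

lemma covering_pencil_image:
  assumes f: "linear_involution f" and pencil: "covering_pencil P Q I L"
  shows "covering_pencil (f ` P) (f ` Q) I (\<lambda>i. f ` L i)"
  unfolding covering_pencil_def
proof (intro conjI allI impI ballI)
  show "finite I" using pencil unfolding covering_pencil_def by blast
  fix i assume "i \<in> I"
  then show "hj_line (f ` L i)" "f ` P \<subseteq> f ` L i"
    using pencil hj_line_image[OF f] unfolding covering_pencil_def by blast+
next
  fix Z :: "'a vec3 set" assume "hj_point Z"
  then obtain i where i: "i \<in> I" "f ` Z \<subseteq> L i"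
    using pencil hj_point_image[OF f] unfolding covering_pencil_def by blast
  have "Z \<subseteq> f ` L i"
    using image_mono[OF i(2), of f] unfolding linear_involution_image_image[OF f] .
  with i(1) show "\<exists>i\<in>I. Z \<subseteq> f ` L i" by blast
next
  show "\<exists>i\<in>I. \<exists>j\<in>I. i \<noteq> j \<and> f ` Q \<subseteq> f ` L i \<and> f ` Q \<subseteq> f ` L j"
    using pencil unfolding covering_pencil_def by (meson image_mono)
qed

lemma arc2_incidences_le:
  assumes arc: "hj_arc K n 2" and "finite I" and lines: "\<forall>i\<in>I. hj_line (L i)"
  shows "(\<Sum>p\<in>#K. card {i\<in>I. p \<subseteq> L i}) \<le> 2 * card I"
proof -
  have "(\<Sum>p\<in>#K. card {i\<in>I. p \<subseteq> L i}) = (\<Sum>i\<in>I. size (filter_mset (\<lambda>p. p \<subseteq> L i) K))"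
    using sum_size_filter_mset_swap[OF \<open>finite I\<close>, of "\<lambda>i p. p \<subseteq> L i" K] by simp
  also have "\<dots> \<le> (\<Sum>i\<in>I. 2)"
    using lines arc unfolding hj_arc_def by (intro sum_mono) blast
  finally show ?thesis by simp
qed

lemma arc_size_le_card_covering_pencil:
  assumes arc: "hj_arc K n 2" and PQ: "{#P, Q#} \<subseteq># K" and pencil: "covering_pencil P Q I L"
  shows "n \<le> card I"
proof -
  have fin: "finite I" and lines: "\<forall>i\<in>I. hj_line (L i) \<and> P \<subseteq> L i"
    and cover: "\<forall>Z. hj_point Z \<longrightarrow> (\<exists>i\<in>I. Z \<subseteq> L i)"
    and Q2: "\<exists>i\<in>I. \<exists>j\<in>I. i \<noteq> j \<and> Q \<subseteq> L i \<and> Q \<subseteq> L j"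
    using pencil unfolding covering_pencil_def by blast+
  define c where "c p = card {i\<in>I. p \<subseteq> L i}" for p
  have upper: "(\<Sum>p\<in>#K. c p) \<le> 2 * card I"
    unfolding c_def using arc2_incidences_le[OF arc fin] lines by blast
  obtain K' where "K = {#P, Q#} + K'" using PQ mset_subset_eq_exists_conv by blast
  then have K: "K = add_mset P (add_mset Q K')" by simp
  \<comment> \<open>In the incidence count \<open>P\<close> occurs \<open>card I\<close> times, \<open>Q\<close> at least twice and
     every other member of \<open>K\<close> at least once.\<close>
  have "{i\<in>I. P \<subseteq> L i} = I" using lines by blast
  then have "c P = card I" by (simp add: c_def)
  moreover have "c Q \<ge> 2"
  proof -
    obtain i j where "i \<in> I" "j \<in> I" "i \<noteq> j" "Q \<subseteq> L i" "Q \<subseteq> L j" using Q2 by blast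
    then have "card {i, j} \<le> c Q" unfolding c_def using fin by (intro card_mono) auto
    with \<open>i \<noteq> j\<close> show ?thesis by simp
  qed
  moreover have "size K' \<le> (\<Sum>p\<in>#K'. c p)"
  proof -
    have "1 \<le> c p" if "p \<in># K'" for p
    proof -
      have "hj_point p" using arc that K unfolding hj_arc_def by simp
      then obtain i where "i \<in> I" "p \<subseteq> L i" using cover by blast
      then show ?thesis unfolding c_def using fin by (auto simp: Suc_le_eq card_gt_0_iff)
    qed
    then have "(\<Sum>p\<in>#K'. 1) \<le> (\<Sum>p\<in>#K'. c p)" by (rule sum_mset_mono)
    then show ?thesis by (simp only: size_eq_sum_mset)
  qed
  moreover have "(\<Sum>p\<in>#K. c p) = c P + c Q + (\<Sum>p\<in>#K'. c p)" and "n = size K' + 2"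
    using arc unfolding K hj_arc_def by simp_all
  ultimately show ?thesis using upper by linarith
qed

definition pencil_line :: "'a::ring_1 vec3 \<Rightarrow> 'a + 'a \<Rightarrow> 'a vec3 set" where
  "pencil_line x i = (case i of Inl g \<Rightarrow> span2 x (0, 1, g) | Inr d \<Rightarrow> span2 x (0, d, 1))"

lemma hj_line_pencil_line: "hj_line (pencil_line (1, a, b) i)"
proof -
  have "hj_line (span2 x y)" if "free2 x y" for x y :: "'a vec3"
    using that unfolding hj_line_iff by blast
  then show ?thesis by (cases i) (simp_all add: pencil_line_def free2_def)
qed

lemma span1_subset_pencil_line: "span1 x \<subseteq> pencil_line x i"
  unfolding pencil_line_def by (simp add: span1_subset_span2_left split: sum.split)

lemma span1_subset_pencil_line_of_mem: "v \<in> pencil_line x i \<Longrightarrow> span1 v \<subseteq> pencil_line x i"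
  unfolding pencil_line_def by (simp add: span1_subset_span2 split: sum.split_asm sum.split)

lemma mem_pencil_line_Inl: "\<beta> = g * \<alpha> \<Longrightarrow> (w, a * w + \<alpha>, b * w + \<beta>) \<in> pencil_line (1, a, b) (Inl g)"
  unfolding pencil_line_def by (simp add: span2_memI[of _ _ w _ \<alpha>])

lemma mem_pencil_line_Inr: "\<alpha> = d * \<beta> \<Longrightarrow> (w, a * w + \<alpha>, b * w + \<beta>) \<in> pencil_line (1, a, b) (Inr d)"
  unfolding pencil_line_def by (simp add: span2_memI[of _ _ w _ \<beta>])

section \<open>Pencils through neighbouring points\<close>

context finite_chain_ring
begin

definition pencil_index :: "('a + 'a) set" where
  "pencil_index = range Inl \<union> Inr ` rad T"

definition has_covering_pencil :: "'a vec3 set \<Rightarrow> 'a vec3 set \<Rightarrow> bool" where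
  "has_covering_pencil P Q \<longleftrightarrow>
     (\<exists>I :: ('a + 'a) set. \<exists>L. card I = card (UNIV :: 'a set) + card (rad T) \<and> covering_pencil P Q I L)"

lemma has_covering_pencil_involution:
  assumes f: "linear_involution f" and "has_covering_pencil (span1 (f x)) (span1 (f y))"
  shows "has_covering_pencil (span1 x) (span1 y)"
proof -
  obtain I :: "('a + 'a) set" and L where I: "card I = card (UNIV :: 'a set) + card (rad T)"
    and "covering_pencil (span1 (f x)) (span1 (f y)) I L"
    using assms(2) unfolding has_covering_pencil_def by blast
  then have "covering_pencil (f ` span1 (f x)) (f ` span1 (f y)) I (\<lambda>i. f ` L i)"
    by (intro covering_pencil_image[OF f])
  then have "covering_pencil (span1 x) (span1 y) I (\<lambda>i. f ` L i)"
    unfolding image_span1[OF f] linear_involution_twice[OF f] .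
  with I show ?thesis unfolding has_covering_pencil_def by blast
qed

lemma card_pencil_index: "card pencil_index = card (UNIV :: 'a set) + card (rad T)"
proof -
  have "range Inl \<inter> Inr ` rad T = ({} :: ('a + 'a) set)" by auto
  then show ?thesis unfolding pencil_index_def by (simp add: card_Un_disjoint card_image)
qed

lemma ex_pencil_line_mem: "\<exists>i\<in>pencil_index. v \<in> pencil_line (1, a, b) i"
proof -
  obtain w v2 v3 where v0: "v = (w, v2, v3)" using prod_cases3 by blast
  define \<alpha> \<beta> where "\<alpha> = v2 - a * w" and "\<beta> = v3 - b * w"
  have v: "v = (w, a * w + \<alpha>, b * w + \<beta>)" by (simp add: v0 \<alpha>_def \<beta>_def)
  show ?thesis
  proof (cases "\<exists>g. \<beta> = g * \<alpha>")
    case True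
    then show ?thesis unfolding v pencil_index_def using mem_pencil_line_Inl by blast
  next
    case False
    then obtain d where "\<alpha> = d * \<beta>" using left_divisibility_total by blast
    moreover have "d \<in> rad T" using left_factor_in_rad[OF calculation False] .
    ultimately show ?thesis unfolding v pencil_index_def using mem_pencil_line_Inr by blast
  qed
qed

lemma two_pencil_lines_through_neighbour:
  assumes "\<alpha> \<in> rad T" "\<beta> \<in> rad T"
  shows "\<exists>i\<in>pencil_index. \<exists>j\<in>pencil_index. i \<noteq> j
    \<and> (1, a + \<alpha>, b + \<beta>) \<in> pencil_line (1, a, b) i \<and> (1, a + \<alpha>, b + \<beta>) \<in> pencil_line (1, a, b) j"
proof (cases "\<exists>g. \<beta> = g * \<alpha>")
  case True
  then obtain g where g: "\<beta> = g * \<alpha>" by blast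
  obtain \<mu> where \<mu>: "\<mu> \<noteq> 0" "\<mu> * \<alpha> = 0"
    using no_left_inverse_imp_zero_divisor assms(1) rad_iff_no_left_inverse by blast
  \<comment> \<open>A nonzero left annihilator of \<open>\<alpha>\<close> gives a second, different slope.\<close>
  then have "\<beta> = (g + \<mu>) * \<alpha>" using g by (simp add: distrib_right)
  then have "(1, a + \<alpha>, b + \<beta>) \<in> pencil_line (1, a, b) (Inl h)" if "h = g \<or> h = g + \<mu>" for h
    using that g mem_pencil_line_Inl[of \<beta> h \<alpha> 1 a b] by auto
  moreover have "Inl g \<noteq> Inl (g + \<mu>)" "Inl g \<in> pencil_index" "Inl (g + \<mu>) \<in> pencil_index"
    using \<mu>(1) unfolding pencil_index_def by simp_all
  ultimately show ?thesis by (intro bexI[of _ "Inl g"] bexI[of _ "Inl (g + \<mu>)"] conjI) simp_all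
next
  case False
  then obtain d where d: "\<alpha> = d * \<beta>" using left_divisibility_total by blast
  have "d \<in> rad T" using left_factor_in_rad[OF d False] .
  have "\<beta> \<noteq> 0" using False by (metis mult_zero_left)
  then obtain \<mu> where \<mu>: "\<mu> \<in> rad T" "\<mu> \<noteq> 0" "\<mu> * \<beta> = 0"
    using ex_left_annihilator_in_rad assms(2) by blast
  then have "\<alpha> = (d + \<mu>) * \<beta>" "d + \<mu> \<in> rad T"
    using d \<open>d \<in> rad T\<close> by (simp_all add: distrib_right rad_add)
  then have "(1, a + \<alpha>, b + \<beta>) \<in> pencil_line (1, a, b) (Inr h)" if "h = d \<or> h = d + \<mu>" for h
    using that d mem_pencil_line_Inr[of \<alpha> h \<beta> 1 a b] by auto
  moreover have "Inr d \<noteq> Inr (d + \<mu>)" "Inr d \<in> pencil_index" "Inr (d + \<mu>) \<in> pencil_index"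
    using \<mu>(2) \<open>d \<in> rad T\<close> \<open>d + \<mu> \<in> rad T\<close> unfolding pencil_index_def by simp_all
  ultimately show ?thesis by (intro bexI[of _ "Inr d"] bexI[of _ "Inr (d + \<mu>)"] conjI) simp_all
qed

lemma covering_pencil_normalized:
  assumes "a' - a \<in> rad T" "b' - b \<in> rad T"
  shows "covering_pencil (span1 (1, a, b)) (span1 (1, a', b')) pencil_index (pencil_line (1, a, b))"
  unfolding covering_pencil_def
proof (intro conjI allI impI ballI)
  show "finite pencil_index" by simp
  show "hj_line (pencil_line (1, a, b) i)" "span1 (1, a, b) \<subseteq> pencil_line (1, a, b) i" for i
    by (rule hj_line_pencil_line, rule span1_subset_pencil_line)
  show "\<exists>i\<in>pencil_index. Z \<subseteq> pencil_line (1, a, b) i" if "hj_point Z" for Z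
    using that ex_pencil_line_mem span1_subset_pencil_line_of_mem unfolding hj_point_iff by blast
  show "\<exists>i\<in>pencil_index. \<exists>j\<in>pencil_index. i \<noteq> j
      \<and> span1 (1, a', b') \<subseteq> pencil_line (1, a, b) i \<and> span1 (1, a', b') \<subseteq> pencil_line (1, a, b) j"
    using two_pencil_lines_through_neighbour[OF assms, of a b] span1_subset_pencil_line_of_mem
    by simp blast
qed

lemma span1_normalize:
  assumes "x1 \<notin> rad T"
  shows "span1 (x1, x2, x3) = span1 (1, x2 * unit_inv x1, x3 * unit_inv x1)"
  using span1_smul_unit[OF unit_inv_notin_rad(1,2)[OF assms], of "(x1, x2, x3)"]
    unit_inv_notin_rad(2)[OF assms] by simp

lemma has_covering_pencil_unit_first:
  assumes "x1 \<notin> rad T" "y1 \<notin> rad T"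
    and "x2 * unit_inv x1 - y2 * unit_inv y1 \<in> rad T"
    and "x3 * unit_inv x1 - y3 * unit_inv y1 \<in> rad T"
  shows "has_covering_pencil (span1 (x1, x2, x3)) (span1 (y1, y2, y3))"
proof -
  have "y2 * unit_inv y1 - x2 * unit_inv x1 \<in> rad T" "y3 * unit_inv y1 - x3 * unit_inv x1 \<in> rad T"
    using rad_uminus[OF assms(3)] rad_uminus[OF assms(4)] by simp_all
  note pencil = covering_pencil_normalized[OF this]
  show ?thesis
    unfolding has_covering_pencil_def span1_normalize[OF assms(1)] span1_normalize[OF assms(2)]
    using card_pencil_index pencil by blast
qed

lemma free1_has_unit_coordinate:
  assumes "free1 (x1, x2, x3)"
  shows "x1 \<notin> rad T \<or> x2 \<notin> rad T \<or> x3 \<notin> rad T"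
proof (rule ccontr)
  assume "\<not> ?thesis"
  moreover obtain s where s: "s \<noteq> 0" "\<forall>\<mu>\<in>rad T. \<mu> * s = 0" using ex_annihilated_by_rad by blast
  ultimately have "smul (x1, x2, x3) s = (0, 0, 0)" by simp
  with s(1) assms show False unfolding free1_def by blast
qed

text \<open>The image of the point \<open>xR\<close> in the residual plane \<open>PG(2, R / rad R)\<close>, in coordinates
  normalised so that the first unit coordinate is \<open>1\<close>. Points with the same image are neighbours.\<close>

definition residue_vec :: "'a vec3 \<Rightarrow> 'a vec3" where
  "residue_vec = (\<lambda>(x1, x2, x3).
     if x1 \<notin> rad T then (1, residue_rep (x2 * unit_inv x1), residue_rep (x3 * unit_inv x1))
     else if x2 \<notin> rad T then (0, 1, residue_rep (x3 * unit_inv x2))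
     else (0, 0, 1))"

definition residue_point :: "'a vec3 set \<Rightarrow> 'a vec3" where
  "residue_point P = residue_vec (SOME x. P = span1 x \<and> free1 x)"

definition residue_plane :: "'a vec3 set" where
  "residue_plane = {1} \<times> range residue_rep \<times> range residue_rep
     \<union> {0} \<times> {1} \<times> range residue_rep \<union> {(0, 0, 1)}"

lemma residue_vec_fst: "fst (residue_vec (x1, x2, x3)) = (if x1 \<in> rad T then 0 else 1)"
  and residue_vec_fst_snd:
    "x1 \<in> rad T \<Longrightarrow> fst (snd (residue_vec (x1, x2, x3))) = (if x2 \<in> rad T then 0 else 1)"
  and residue_vec_first_unit: "x1 \<notin> rad T \<Longrightarrow>
    residue_vec (x1, x2, x3) = (1, residue_rep (x2 * unit_inv x1), residue_rep (x3 * unit_inv x1))"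
  and residue_vec_second_unit: "x1 \<in> rad T \<Longrightarrow> x2 \<notin> rad T \<Longrightarrow>
    residue_vec (x1, x2, x3) = (0, 1, residue_rep (x3 * unit_inv x2))"
  unfolding residue_vec_def by simp_all

lemma residue_point_in_residue_plane: "residue_point P \<in> residue_plane"
  unfolding residue_point_def residue_vec_def residue_plane_def by (auto split: prod.split)

lemma card_residue_plane:
  "card residue_plane \<le> residue_order T * residue_order T + residue_order T + 1"
proof -
  let ?A = "{1 :: 'a} \<times> range residue_rep \<times> range residue_rep"
    and ?B = "{0 :: 'a} \<times> {1 :: 'a} \<times> range residue_rep"
    and ?C = "{(0 :: 'a, 0 :: 'a, 1 :: 'a)}"
  have "card residue_plane \<le> card ?A + card ?B + card ?C"
    unfolding residue_plane_def using card_Un_le[of "?A \<union> ?B" ?C] card_Un_le[of ?A ?B] by linarith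
  then show ?thesis by (simp add: card_cartesian_product card_range_residue_rep)
qed

lemma has_covering_pencil_same_residue_first_unit:
  assumes x1: "x1 \<notin> rad T" and same: "residue_vec (x1, x2, x3) = residue_vec (y1, y2, y3)"
  shows "has_covering_pencil (span1 (x1, x2, x3)) (span1 (y1, y2, y3))"
proof -
  have "fst (residue_vec (y1, y2, y3)) = 1" using x1 by (simp add: same[symmetric] residue_vec_fst)
  then have y1: "y1 \<notin> rad T" by (simp add: residue_vec_fst split: if_splits)
  with same x1 have "x2 * unit_inv x1 - y2 * unit_inv y1 \<in> rad T" "x3 * unit_inv x1 - y3 * unit_inv y1 \<in> rad T"
    by (simp_all add: residue_vec_first_unit residue_rep_eq_iff)
  with x1 y1 show ?thesis by (rule has_covering_pencil_unit_first)
qed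

lemma has_covering_pencil_same_residue_second_unit:
  assumes x12: "x1 \<in> rad T" "x2 \<notin> rad T" and same: "residue_vec (x1, x2, x3) = residue_vec (y1, y2, y3)"
  shows "has_covering_pencil (span1 (x1, x2, x3)) (span1 (y1, y2, y3))"
proof -
  have "fst (residue_vec (y1, y2, y3)) = 0" using x12 by (simp add: same[symmetric] residue_vec_fst)
  then have y1: "y1 \<in> rad T" by (simp add: residue_vec_fst split: if_splits)
  with x12 have "fst (snd (residue_vec (y1, y2, y3))) = 1" by (simp add: same[symmetric] residue_vec_fst_snd)
  with y1 have y2: "y2 \<notin> rad T" by (simp add: residue_vec_fst_snd split: if_splits)
  with same x12 y1 have "x3 * unit_inv x2 - y3 * unit_inv y2 \<in> rad T"
    by (simp add: residue_vec_second_unit residue_rep_eq_iff)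
  moreover have "x1 * unit_inv x2 - y1 * unit_inv y2 \<in> rad T"
    using x12(1) y1 by (intro rad_diff rad_mult_right)
  ultimately have "has_covering_pencil (span1 (swap12 (x1, x2, x3))) (span1 (swap12 (y1, y2, y3)))"
    using x12(2) y2 has_covering_pencil_unit_first[of x2 y2 x1 y1 x3 y3] by (simp add: swap12_def)
  then show ?thesis by (rule has_covering_pencil_involution[OF linear_involution_swap12])
qed

lemma has_covering_pencil_same_residue_third_unit:
  assumes x123: "x1 \<in> rad T" "x2 \<in> rad T" "x3 \<notin> rad T" and "free1 (y1, y2, y3)"
    and same: "residue_vec (x1, x2, x3) = residue_vec (y1, y2, y3)"
  shows "has_covering_pencil (span1 (x1, x2, x3)) (span1 (y1, y2, y3))"
proof -
  have "fst (residue_vec (y1, y2, y3)) = 0" using x123 by (simp add: same[symmetric] residue_vec_fst)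
  then have y1: "y1 \<in> rad T" by (simp add: residue_vec_fst split: if_splits)
  with x123 have "fst (snd (residue_vec (y1, y2, y3))) = 0" by (simp add: same[symmetric] residue_vec_fst_snd)
  with y1 have y2: "y2 \<in> rad T" by (simp add: residue_vec_fst_snd split: if_splits)
  with y1 have y3: "y3 \<notin> rad T" using free1_has_unit_coordinate \<open>free1 (y1, y2, y3)\<close> by blast
  have "x2 * unit_inv x3 - y2 * unit_inv y3 \<in> rad T" "x1 * unit_inv x3 - y1 * unit_inv y3 \<in> rad T"
    using x123 y1 y2 by (simp_all add: rad_diff rad_mult_right)
  then have "has_covering_pencil (span1 (swap13 (x1, x2, x3))) (span1 (swap13 (y1, y2, y3)))"
    using x123(3) y3 has_covering_pencil_unit_first[of x3 y3 x2 y2 x1 y1] by (simp add: swap13_def)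
  then show ?thesis by (rule has_covering_pencil_involution[OF linear_involution_swap13])
qed

lemma has_covering_pencil_same_residue_point:
  assumes "hj_point P" "hj_point Q" "residue_point P = residue_point Q"
  shows "has_covering_pencil P Q"
proof -
  define x where "x = (SOME x. P = span1 x \<and> free1 x)"
  define y where "y = (SOME y. Q = span1 y \<and> free1 y)"
  have x: "P = span1 x \<and> free1 x"
    using assms(1) unfolding hj_point_iff x_def by (rule someI_ex)
  have y: "Q = span1 y \<and> free1 y"
    using assms(2) unfolding hj_point_iff y_def by (rule someI_ex)
  obtain x1 x2 x3 y1 y2 y3 where xy: "x = (x1, x2, x3)" "y = (y1, y2, y3)"
    by (cases x, cases y) blast
  have same: "residue_vec (x1, x2, x3) = residue_vec (y1, y2, y3)"
    using assms(3) unfolding residue_point_def x_def[symmetric] y_def[symmetric] xy .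
  consider "x1 \<notin> rad T" | "x1 \<in> rad T" "x2 \<notin> rad T" | "x1 \<in> rad T" "x2 \<in> rad T" "x3 \<notin> rad T"
    using free1_has_unit_coordinate x xy by blast
  then have "has_covering_pencil (span1 x) (span1 y)"
    using same x y unfolding xy
    by cases (simp_all add: has_covering_pencil_same_residue_first_unit
        has_covering_pencil_same_residue_second_unit has_covering_pencil_same_residue_third_unit)
  with x y show ?thesis by simp
qed

end

theorem mainTheorem2:
  fixes T :: "'a::{ring_1,finite} itself"
  assumes "chain_ring T"
    and "chain_length T \<ge> 3"
  shows "\<not> (\<exists>A :: 'a vec3 set multiset.
            hj_arc A (residue_order T ^ chain_length T + residue_order T ^ (chain_length T - 1) + 1) 2)"
proof
  interpret finite_chain_ring T by (rule finite_chain_ring.intro) fact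
  let ?q = "residue_order T" and ?m = "chain_length T"
  assume "\<exists>A :: 'a vec3 set multiset. hj_arc A (?q ^ ?m + ?q ^ (?m - 1) + 1) 2"
  then obtain K :: "'a vec3 set multiset" where arc: "hj_arc K (?q ^ ?m + ?q ^ (?m - 1) + 1) 2" ..
  then have points: "\<forall>p\<in>#K. hj_point p" and size: "size K = ?q ^ ?m + ?q ^ (?m - 1) + 1"
    unfolding hj_arc_def by blast+
  have "?q * ?q < ?q ^ ?m" "?q \<le> ?q ^ (?m - 1)"
    using assms(2) residue_order_ge_2 power_strict_increasing[of 2 ?m ?q] self_le_power[of ?q "?m - 1"]
    by (simp_all add: power2_eq_square)
  then have "card residue_plane < size K" using card_residue_plane size by linarith
  then obtain P Q where PQ: "{#P, Q#} \<subseteq># K" "residue_point P = residue_point Q"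
    using multiset_pigeonhole[OF finite _ \<open>card residue_plane < size K\<close>] residue_point_in_residue_plane
    by blast
  then have "hj_point P" "hj_point Q" using points by (auto dest: mset_subset_eqD)
  then obtain I :: "('a + 'a) set" and L where
    I: "card I = card (UNIV :: 'a set) + card (rad T)" and pencil: "covering_pencil P Q I L"
    using has_covering_pencil_same_residue_point PQ(2) unfolding has_covering_pencil_def by blast
  have "?q ^ ?m + ?q ^ (?m - 1) + 1 \<le> card I"
    by (rule arc_size_le_card_covering_pencil[OF arc PQ(1) pencil])
  then show False using I card_UNIV_le card_rad_le by linarith
qed

end
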